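(* Let $\mathcal{M}\subset\mathbb{R}^d$ be a Riemannian manifold, let $\mathcal{Z}=\mathcal{Z}_1\times\dots\times\mathcal{Z}_s$ be a Cartesian product of finite nonempty sets, and let $\{\mathbf{u}_z \mid z\in\mathcal{Z}\}\subset\mathcal{M}$ be a geodesically decomposable set of embeddings with intrinsic mean $\mu$. Then there exist unique vectors $\mathbf{v}_{z_i}\in T_\mu\mathcal{M}$, one for each $z_i\in\mathcal{Z}_i$ and each $i=1,\dots,s$, such that $\sum_{z_i\in\mathcal{Z}_i}\mathbf{v}_{z_i}=0$ for all $i=1,\dots,s$ and $$\mathbf{u}_z=\mathrm{Exp}_\mu(\mathbf{v}_{z_1}+\dots+\mathbf{v}_{z_s})\quad\text{for all } z=(z_1,\dots,z_s)\in\mathcal{Z}.$$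
   Context: $\mathcal{M}$ has intrinsic (geodesic) distance $d_\mathcal{M}$. For $\mu\in\mathcal{M}$, $T_\mu\mathcal{M}$ is the tangent space, $\mathrm{Exp}_\mu:T_\mu\mathcal{M}\to\mathcal{M}$ the exponential map ($\mathrm{Exp}_\mu(\mathbf{v})=\gamma_\mathbf{v}(1)$ for the geodesic $\gamma_\mathbf{v}$ with $\gamma_\mathbf{v}(0)=\mu$, $\dot\gamma_\mathbf{v}(0)=\mathbf{v}$), and $\mathrm{Log}_\mu=\mathrm{Exp}_\mu^{-1}$ its (local) inverse. Given points $\mathbf{u}_1,\dots,\mathbf{u}_N\in\mathcal{M}$ and weights $w_i\ge 0$ with $\sum_i w_i=1$, the (weighted) intrinsic mean is $\mu=\arg\min_{\mathbf{u}\in\mathcal{M}}\sum_i w_i\, d_\mathcal{M}(\mathbf{u},\mathbf{u}_i)^2$ (unweighted: $w_i=1/N$). Standing assumption of the paper: the intrinsic mean exists, is unique, the logarithmic map is defined at the relevant points, and $\mu$ satisfies the centering property $\sum_i w_i\,\mathrm{Log}_\mu(\mathbf{u}_i)=0$. Definition: a set $\{\mathbf{u}_z\mid z\in\mathcal{Z}\}\subset\mathcal{M}$ with intrinsic mean $\mu$ is geodesically decomposable if there exist vectors $\mathbf{v}_{z_i}\in T_\mu\mathcal{M}$ for all $z_i\in\mathcal{Z}_i$ ($i=1,\dots,s$) such that $\mathbf{u}_z=\mathrm{Exp}_\mu(\mathbf{v}_{z_1}+\dots+\mathbf{v}_{z_s})$ for all $z=(z_1,\dots,z_s)\in\mathcal{Z}$.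 *)

theory Defs
  imports "HOL-Analysis.Analysis"
begin

text \<open>Index set Z = Z_0 x ... x Z_(s-1), represented as functions z on {..<s}
 with z i in Z i (extensional, PiE).\<close>

definition index_product :: "nat \<Rightarrow> (nat \<Rightarrow> 'a set) \<Rightarrow> (nat \<Rightarrow> 'a) set" where
  "index_product s Z = PiE {..<s} Z"

definition is_intrinsic_mean ::
  "'p set \<Rightarrow> ('p \<Rightarrow> 'p \<Rightarrow> real) \<Rightarrow> 'i set \<Rightarrow> ('i \<Rightarrow> real) \<Rightarrow> ('i \<Rightarrow> 'p) \<Rightarrow> 'p \<Rightarrow> bool" where
  "is_intrinsic_mean M dM I w u mu \<longleftrightarrow>
     mu \<in> M \<and> (\<forall>x\<in>M. (\<Sum>z\<in>I. w z * (dM mu (u z))\<^sup>2) \<le> (\<Sum>z\<in>I. w z * (dM x (u z))\<^sup>2))"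

text \<open>Geodesic decomposability w.r.t. the exponential map Exp (at mu) with tangent space T.\<close>
definition geodesically_decomposable ::
  "('v::comm_monoid_add) set \<Rightarrow> ('v \<Rightarrow> 'p) \<Rightarrow> nat \<Rightarrow> (nat \<Rightarrow> 'a set) \<Rightarrow> ((nat \<Rightarrow> 'a) \<Rightarrow> 'p) \<Rightarrow> bool" where
  "geodesically_decomposable T Exp s Z u \<longleftrightarrow>
     (\<exists>v :: nat \<Rightarrow> 'a \<Rightarrow> 'v.
        (\<forall>i<s. \<forall>a\<in>Z i. v i a \<in> T) \<and>
        (\<forall>z\<in>index_product s Z. u z = Exp (\<Sum>i<s. v i (z i))))"

end

theory Submission
  imports Defs
begin

text \<open>Write the decomposition as Log (u z) = v_1 z_1 + ... + v_s z_s. Shifting each v_i by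
  its mean over Z_i keeps the decomposition: summing Log (u z) over the grid gives card Z
  times the sum of these means, which the centering property makes zero. For uniqueness,
  the difference D of two zero-sum decompositions satisfies D_1 z_1 + ... + D_s z_s = 0 on
  the grid; changing a single coordinate shows that D_i is constant on Z_i, and having zero
  sum it vanishes.\<close>

lemma sum_PiE_component:
  fixes g :: "'b \<Rightarrow> 'v::real_vector"
  assumes "i \<in> I"
  shows "(\<Sum>z\<in>PiE I Z. g (z i)) = real (card (PiE (I - {i}) Z)) *\<^sub>R (\<Sum>a\<in>Z i. g a)"
proof -
  have I: "I = insert i (I - {i})" using assms by blast
  have "(\<Sum>z\<in>PiE I Z. g (z i)) = (\<Sum>(a, f)\<in>Z i \<times> PiE (I - {i}) Z. g ((f(i := a)) i))"
    by (subst I, subst PiE_insert_eq, subst sum.reindex) (auto intro: inj_combinator simp: case_prod_beta)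
  also have "\<dots> = (\<Sum>a\<in>Z i. \<Sum>f\<in>PiE (I - {i}) Z. g a)"
    by (simp add: sum.cartesian_product)
  finally show ?thesis
    by (simp add: scaleR_sum_right sum_constant_scaleR)
qed

lemma card_PiE_remove:
  assumes "finite I" "i \<in> I"
  shows "card (PiE I Z) = card (Z i) * card (PiE (I - {i}) Z)"
  using assms by (simp add: card_PiE prod.remove)

definition component_mean :: "('i \<Rightarrow> 'b set) \<Rightarrow> ('i \<Rightarrow> 'b \<Rightarrow> 'v::real_vector) \<Rightarrow> 'i \<Rightarrow> 'v" where
  "component_mean Z v i = (1 / real (card (Z i))) *\<^sub>R (\<Sum>a\<in>Z i. v i a)"

lemma sum_minus_component_mean:
  assumes "finite (Z i)" "Z i \<noteq> {}"
  shows "(\<Sum>a\<in>Z i. v i a - component_mean Z v i) = 0"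
  using assms by (simp add: component_mean_def sum_subtractf sum_constant_scaleR)

lemma sum_PiE_additive:
  fixes v :: "'i \<Rightarrow> 'b \<Rightarrow> 'v::real_vector"
  assumes "finite I" "\<forall>i\<in>I. finite (Z i) \<and> Z i \<noteq> {}"
  shows "(\<Sum>z\<in>PiE I Z. \<Sum>i\<in>I. v i (z i)) = real (card (PiE I Z)) *\<^sub>R (\<Sum>i\<in>I. component_mean Z v i)"
proof -
  have "(\<Sum>z\<in>PiE I Z. \<Sum>i\<in>I. v i (z i)) = (\<Sum>i\<in>I. \<Sum>z\<in>PiE I Z. v i (z i))"
    by (rule sum.swap)
  also have "\<dots> = (\<Sum>i\<in>I. real (card (PiE I Z)) *\<^sub>R component_mean Z v i)"
    using assms by (intro sum.cong)
      (simp_all add: sum_PiE_component card_PiE_remove component_mean_def card_gt_0_iff)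
  finally show ?thesis
    by (simp add: scaleR_sum_right)
qed

lemma component_means_sum_zero:
  fixes v :: "'i \<Rightarrow> 'b \<Rightarrow> 'v::real_vector"
  assumes "finite I" "\<forall>i\<in>I. finite (Z i) \<and> Z i \<noteq> {}"
    and "(\<Sum>z\<in>PiE I Z. \<Sum>i\<in>I. v i (z i)) = 0"
  shows "(\<Sum>i\<in>I. component_mean Z v i) = 0"
proof -
  have "card (PiE I Z) \<noteq> 0"
    using assms by (simp add: card_gt_0_iff finite_PiE PiE_eq_empty_iff)
  then show ?thesis
    using assms by (simp add: sum_PiE_additive)
qed

lemma additive_zero_sum_eq_0:
  fixes D :: "'i \<Rightarrow> 'b \<Rightarrow> 'v::real_vector"
  assumes "finite I" "\<forall>i\<in>I. finite (Z i) \<and> Z i \<noteq> {}"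
    and additive: "\<forall>z\<in>PiE I Z. (\<Sum>i\<in>I. D i (z i)) = 0"
    and zero_sum: "\<forall>i\<in>I. (\<Sum>a\<in>Z i. D i a) = 0"
    and "i \<in> I" "a \<in> Z i"
  shows "D i a = 0"
proof -
  obtain z where z: "z \<in> PiE I Z"
    using assms(2) by (metis PiE_eq_empty_iff ex_in_conv)
  define c where "c = (\<Sum>j\<in>I - {i}. D j (z j))"
  have const: "D i b = - c" if "b \<in> Z i" for b
  proof -
    have "z(i := b) \<in> PiE I Z"
      using z that \<open>i \<in> I\<close> by (auto simp: PiE_iff extensional_def)
    then have "(\<Sum>j\<in>I. D j ((z(i := b)) j)) = 0"
      using additive by blast
    moreover have "(\<Sum>j\<in>I. D j ((z(i := b)) j)) = D i b + c"
      using \<open>finite I\<close> \<open>i \<in> I\<close> unfolding c_def by (simp add: sum.remove)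
    ultimately show ?thesis
      by (simp add: eq_neg_iff_add_eq_0)
  qed
  have "real (card (Z i)) *\<^sub>R (- c) = (\<Sum>b\<in>Z i. D i b)"
    by (simp add: const sum_constant_scaleR)
  then have "real (card (Z i)) *\<^sub>R c = 0"
    using zero_sum \<open>i \<in> I\<close> by simp
  then show ?thesis
    using assms(2) \<open>i \<in> I\<close> \<open>a \<in> Z i\<close> const by simp
qed

lemma zero_sum_decomposition_unique:
  fixes w w' :: "'i \<Rightarrow> 'b \<Rightarrow> 'v::real_vector"
  assumes "finite I" "\<forall>i\<in>I. finite (Z i) \<and> Z i \<noteq> {}"
    and "\<forall>z\<in>PiE I Z. (\<Sum>i\<in>I. w i (z i)) = (\<Sum>i\<in>I. w' i (z i))"
    and "\<forall>i\<in>I. (\<Sum>a\<in>Z i. w i a) = 0" "\<forall>i\<in>I. (\<Sum>a\<in>Z i. w' i a) = 0"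
    and "i \<in> I" "a \<in> Z i"
  shows "w i a = w' i a"
  using additive_zero_sum_eq_0[of I Z "\<lambda>i a. w i a - w' i a" i a] assms
  by (simp add: sum_subtractf)

lemma recentred_components:
  fixes v :: "'i \<Rightarrow> 'b \<Rightarrow> 'v::real_vector"
  assumes "finite I" "\<forall>i\<in>I. finite (Z i) \<and> Z i \<noteq> {}"
    and "(\<Sum>z\<in>PiE I Z. \<Sum>i\<in>I. v i (z i)) = 0"
  shows "\<forall>i\<in>I. (\<Sum>a\<in>Z i. v i a - component_mean Z v i) = 0"
    and "(\<Sum>i\<in>I. v i (z i) - component_mean Z v i) = (\<Sum>i\<in>I. v i (z i))"
proof -
  show "\<forall>i\<in>I. (\<Sum>a\<in>Z i. v i a - component_mean Z v i) = 0"
    using assms(2) by (simp add: sum_minus_component_mean)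
  show "(\<Sum>i\<in>I. v i (z i) - component_mean Z v i) = (\<Sum>i\<in>I. v i (z i))"
    using component_means_sum_zero[OF assms] by (simp add: sum_subtractf)
qed

lemma component_mean_in_subspace:
  assumes "subspace T" "\<forall>a\<in>Z i. v i a \<in> T"
  shows "component_mean Z v i \<in> T"
  using assms unfolding component_mean_def by (intro subspace_scale subspace_sum) auto

lemma Log_of_decomposition:
  assumes "subspace T" "\<forall>x\<in>T. Log (Exp x) = x"
    and "z \<in> PiE I Z" "\<forall>i\<in>I. \<forall>a\<in>Z i. w i a \<in> T" "u z = Exp (\<Sum>i\<in>I. w i (z i))"
  shows "Log (u z) = (\<Sum>i\<in>I. w i (z i))"
proof -
  have "(\<Sum>i\<in>I. w i (z i)) \<in> T"
    using assms by (intro subspace_sum) auto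
  then show ?thesis
    using assms by simp
qed

theorem lemma1:
  fixes M :: "(real ^ 'd) set"
    and dM :: "real ^ 'd \<Rightarrow> real ^ 'd \<Rightarrow> real"
    and T :: "(real ^ 'd) set"
    and mu :: "real ^ 'd"
    and Exp :: "real ^ 'd \<Rightarrow> real ^ 'd"
    and Log :: "real ^ 'd \<Rightarrow> real ^ 'd"
    and s :: nat
    and Z :: "nat \<Rightarrow> 'a set"
    and u :: "(nat \<Rightarrow> 'a) \<Rightarrow> real ^ 'd"
  assumes tangent: "subspace T"
    and exp_in: "\<forall>v\<in>T. Exp v \<in> M"
    and log_exp: "\<forall>v\<in>T. Log (Exp v) = v"
    and fin: "\<forall>i<s. finite (Z i) \<and> Z i \<noteq> {}"
    and in_M: "\<forall>z\<in>index_product s Z. u z \<in> M"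
    and mean: "is_intrinsic_mean M dM (index_product s Z)
                 (\<lambda>_. 1 / real (card (index_product s Z))) u mu"
    and centering: "(\<Sum>z\<in>index_product s Z. (1 / real (card (index_product s Z))) *\<^sub>R Log (u z)) = 0"
    and decomp: "geodesically_decomposable T Exp s Z u"
  shows "\<exists>v :: nat \<Rightarrow> 'a \<Rightarrow> real ^ 'd.
           ((\<forall>i<s. \<forall>a\<in>Z i. v i a \<in> T) \<and>
            (\<forall>i<s. (\<Sum>a\<in>Z i. v i a) = 0) \<and>
            (\<forall>z\<in>index_product s Z. u z = Exp (\<Sum>i<s. v i (z i))))
         \<and> (\<forall>w :: nat \<Rightarrow> 'a \<Rightarrow> real ^ 'd.
              ((\<forall>i<s. \<forall>a\<in>Z i. w i a \<in> T) \<and>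
               (\<forall>i<s. (\<Sum>a\<in>Z i. w i a) = 0) \<and>
               (\<forall>z\<in>index_product s Z. u z = Exp (\<Sum>i<s. w i (z i))))
              \<longrightarrow> (\<forall>i<s. \<forall>a\<in>Z i. w i a = v i a))"
proof -
  let ?P = "index_product s Z"
  have grid: "finite {..<s}" "\<forall>i\<in>{..<s}. finite (Z i) \<and> Z i \<noteq> {}"
    using fin by auto
  have log_u: "Log (u z) = (\<Sum>i<s. w i (z i))"
    if "z \<in> ?P" "\<forall>i<s. \<forall>a\<in>Z i. w i a \<in> T" "\<forall>z\<in>?P. u z = Exp (\<Sum>i<s. w i (z i))" for w z
    by (rule Log_of_decomposition[where Log = Log and Exp = Exp, OF tangent log_exp])
      (use that in \<open>auto simp: index_product_def\<close>)
  from decomp obtain v where vT: "\<forall>i<s. \<forall>a\<in>Z i. v i a \<in> T"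
    and vu: "\<forall>z\<in>?P. u z = Exp (\<Sum>i<s. v i (z i))"
    unfolding geodesically_decomposable_def by blast
  have "finite ?P" "?P \<noteq> {}"
    using grid by (auto simp: index_product_def PiE_eq_empty_iff intro!: finite_PiE)
  then have "(\<Sum>z\<in>?P. Log (u z)) = 0"
    using centering by (simp add: scaleR_sum_right[symmetric])
  then have "(\<Sum>z\<in>?P. \<Sum>i<s. v i (z i)) = 0"
    using log_u[OF _ vT vu] by simp
  note recentred = recentred_components[OF grid this[unfolded index_product_def]]
  define v' where "v' i a = v i a - component_mean Z v i" for i a
  have v'T: "\<forall>i<s. \<forall>a\<in>Z i. v' i a \<in> T"
    using vT unfolding v'_def
    by (simp add: subspace_diff[OF tangent] component_mean_in_subspace[OF tangent])
  have v'_sum: "\<forall>i<s. (\<Sum>a\<in>Z i. v' i a) = 0"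
    using recentred(1) by (simp add: v'_def)
  have v'u: "\<forall>z\<in>?P. u z = Exp (\<Sum>i<s. v' i (z i))"
    using vu recentred(2) by (simp add: v'_def)
  have "\<forall>i<s. \<forall>a\<in>Z i. w i a = v' i a"
    if "\<forall>i<s. \<forall>a\<in>Z i. w i a \<in> T" "\<forall>i<s. (\<Sum>a\<in>Z i. w i a) = 0"
      "\<forall>z\<in>?P. u z = Exp (\<Sum>i<s. w i (z i))" for w
  proof -
    have "\<forall>z\<in>?P. (\<Sum>i<s. w i (z i)) = (\<Sum>i<s. v' i (z i))"
      using log_u[OF _ that(1,3)] log_u[OF _ v'T v'u] by metis
    then show ?thesis
      using zero_sum_decomposition_unique[OF grid, of w v'] that(2) v'_sum
      unfolding index_product_def by blast
  qed
  then show ?thesis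
    using v'T v'_sum v'u by blast
qed

end
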